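(* Let $A=\mathbb{C}[x,y,z]$, let $s,t\in A\setminus\{0\}$ be coprime and equip $A$ with the Poisson bracket $\{x,y\}=t s_z-s t_z$, $\{y,z\}=t s_x-s t_x$, $\{z,x\}=t s_y-s t_y$. Let $(\lambda,\mu)\in\mathbb{P}^1(\mathbb{C})$ and let $u$ be an irreducible factor in $A$ of $f_{\lambda,\mu}:=\lambda s-\mu t$. The following are equivalent: (1) $uA$ is Poisson primitive; (2) $uA$ is not residually null; (3) $u$ has multiplicity one as an irreducible factor of $f_{\lambda,\mu}$; (4) $uA$ is locally closed.
   Context: Subscripts denote partial derivatives. A Poisson ideal is an ideal $I$ with $\{a,I\}\subseteq I$ for all $a$; Poisson prime = Poisson and prime. The Poisson core of an ideal is the largest Poisson ideal it contains; a Poisson prime is Poisson primitive if it is the Poisson core of a maximal ideal. A Poisson ideal $I$ is residually null if the induced bracket on $A/I$ is zero. A Poisson prime $P$ is locally closed if it is not the intersection of the Poisson prime ideals strictly containing it. *)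

theory Defs
  imports Complex_Main "HOL-Computational_Algebra.Polynomial_Factorial" "HOL-Computational_Algebra.Field_as_Ring"
begin

text \<open>A = C[x,y,z], realised as nested univariate polynomials C[x][y][z]:
  the outermost variable is z, the middle one y, the innermost one x.\<close>
type_synonym cpoly3 = "complex poly poly poly"

definition varx :: cpoly3 where "varx = [:[:[:0, 1:]:]:]"
definition vary :: cpoly3 where "vary = [:[:0, 1:]:]"
definition varz :: cpoly3 where "varz = [:0, 1:]"

definition const3 :: "complex \<Rightarrow> cpoly3" where "const3 c = [:[:[:c:]:]:]"

definition dx :: "cpoly3 \<Rightarrow> cpoly3" where "dx p = map_poly (map_poly pderiv) p"
definition dy :: "cpoly3 \<Rightarrow> cpoly3" where "dy p = map_poly pderiv p"
definition dz :: "cpoly3 \<Rightarrow> cpoly3" where "dz p = pderiv p"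

definition jac :: "cpoly3 \<Rightarrow> cpoly3 \<Rightarrow> cpoly3 \<Rightarrow> cpoly3" where
  "jac f g h = dx f * (dy g * dz h - dz g * dy h)
             - dy f * (dx g * dz h - dz g * dx h)
             + dz f * (dx g * dy h - dy g * dx h)"

text \<open>The Poisson bracket with {x,y} = t s_z - s t_z, {y,z} = t s_x - s t_x,
  {z,x} = t s_y - s t_y, extended as a biderivation:
  {f,g} = t jac(f,g,s) - s jac(f,g,t).\<close>
definition pbr :: "cpoly3 \<Rightarrow> cpoly3 \<Rightarrow> cpoly3 \<Rightarrow> cpoly3 \<Rightarrow> cpoly3" where
  "pbr s t f g = t * jac f g s - s * jac f g t"

definition is_ideal :: "cpoly3 set \<Rightarrow> bool" where
  "is_ideal I \<longleftrightarrow> 0 \<in> I \<and> (\<forall>a\<in>I. \<forall>b\<in>I. a + b \<in> I) \<and> (\<forall>r. \<forall>a\<in>I. r * a \<in> I)"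

definition is_prime_ideal :: "cpoly3 set \<Rightarrow> bool" where
  "is_prime_ideal P \<longleftrightarrow> is_ideal P \<and> P \<noteq> UNIV \<and> (\<forall>a b. a * b \<in> P \<longrightarrow> a \<in> P \<or> b \<in> P)"

definition is_maximal_ideal :: "cpoly3 set \<Rightarrow> bool" where
  "is_maximal_ideal M \<longleftrightarrow> is_ideal M \<and> M \<noteq> UNIV \<and>
     (\<forall>J. is_ideal J \<and> M \<subseteq> J \<longrightarrow> J = M \<or> J = UNIV)"

definition principal_ideal :: "cpoly3 \<Rightarrow> cpoly3 set" where
  "principal_ideal u = {u * a | a. True}"

definition poisson_ideal :: "cpoly3 \<Rightarrow> cpoly3 \<Rightarrow> cpoly3 set \<Rightarrow> bool" where
  "poisson_ideal s t I \<longleftrightarrow> is_ideal I \<and> (\<forall>a. \<forall>b\<in>I. pbr s t a b \<in> I)"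

definition poisson_prime :: "cpoly3 \<Rightarrow> cpoly3 \<Rightarrow> cpoly3 set \<Rightarrow> bool" where
  "poisson_prime s t P \<longleftrightarrow> poisson_ideal s t P \<and> is_prime_ideal P"

definition is_poisson_core :: "cpoly3 \<Rightarrow> cpoly3 \<Rightarrow> cpoly3 set \<Rightarrow> cpoly3 set \<Rightarrow> bool" where
  "is_poisson_core s t P I \<longleftrightarrow> poisson_ideal s t P \<and> P \<subseteq> I \<and>
     (\<forall>J. poisson_ideal s t J \<and> J \<subseteq> I \<longrightarrow> J \<subseteq> P)"

definition poisson_primitive :: "cpoly3 \<Rightarrow> cpoly3 \<Rightarrow> cpoly3 set \<Rightarrow> bool" where
  "poisson_primitive s t P \<longleftrightarrow> poisson_prime s t P \<and>
     (\<exists>M. is_maximal_ideal M \<and> is_poisson_core s t P M)"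

definition residually_null :: "cpoly3 \<Rightarrow> cpoly3 \<Rightarrow> cpoly3 set \<Rightarrow> bool" where
  "residually_null s t I \<longleftrightarrow> poisson_ideal s t I \<and> (\<forall>a b. pbr s t a b \<in> I)"

definition locally_closed :: "cpoly3 \<Rightarrow> cpoly3 \<Rightarrow> cpoly3 set \<Rightarrow> bool" where
  "locally_closed s t P \<longleftrightarrow> poisson_prime s t P \<and>
     P \<noteq> \<Inter>{Q. poisson_prime s t Q \<and> P \<subset> Q}"

end

theory Submission
  imports Defs "HOL-Computational_Algebra.Fundamental_Theorem_Algebra"
begin

text \<open>Write \<open>w = t grad s - s grad t\<close>, so that \<open>{a,b} = (grad a \<times> grad b) \<cdot> w\<close>, and
  \<open>f = \<lambda>s - \<mu>t\<close>. Both \<open>\<lambda>w\<close> and \<open>\<mu>w\<close> are of the form \<open>h grad f - f grad h\<close>.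

  If \<open>u\<^sup>2\<close> divides \<open>f\<close>, then \<open>u\<close> divides \<open>w\<close>, so all brackets lie in \<open>(u)\<close>: the ideal is
  residually null. Then every ideal containing \<open>(u)\<close> is Poisson, in particular the point
  ideals of the zero set of \<open>u\<close>; these intersect to \<open>(u)\<close>, and \<open>(u)\<close> is not maximal, so
  \<open>(u)\<close> is neither locally closed nor primitive.

  If \<open>u\<close> divides \<open>f\<close> exactly once, \<open>w \<equiv> c grad u (mod u)\<close> with \<open>c\<close> not divisible by
  \<open>u\<close>. Then \<open>(u)\<close> is Poisson but not residually null, since \<open>u\<close> cannot divide its own
  gradient. Moreover,
  for a Poisson ideal \<open>J \<supseteq> (u)\<close> the brackets with the coordinates put
  \<open>c (grad e \<times> grad u)\<close> into \<open>J\<close> for every \<open>e \<in> J\<close>. For \<open>g = c \<partial>u\<close>, a suitable partial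
  derivative of \<open>u\<close>, this makes every Poisson ideal \<open>J \<supset> (u)\<close> with \<open>J : g = J\<close>
  closed under enough partial derivatives to reach a nonzero constant. Hence \<open>g\<close> lies in
  all Poisson primes strictly above \<open>(u)\<close>, which makes \<open>(u)\<close> locally closed, and the
  maximal ideal of a point of the zero set of \<open>u\<close> where \<open>g \<noteq> 0\<close> has Poisson core \<open>(u)\<close>.\<close>

lemma map_poly_derivation:
  fixes D :: "'a::comm_ring \<Rightarrow> 'a"
  assumes add: "\<And>a b. D (a + b) = D a + D b"
    and mult: "\<And>a b. D (a * b) = D a * b + a * D b"
  shows "map_poly D (p + q) = map_poly D p + map_poly D q"
    and "map_poly D (p * q) = map_poly D p * q + p * map_poly D q"
proof -
  have D0: "D 0 = 0" using add[of 0 0] by simp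
  show "map_poly D (p + q) = map_poly D p + map_poly D q"
    by (rule poly_eqI) (simp add: coeff_map_poly D0 add)
  show "map_poly D (p * q) = map_poly D p * q + p * map_poly D q"
  proof (rule poly_eqI)
    fix n
    have "coeff (map_poly D (p * q)) n = D (\<Sum>i\<le>n. coeff p i * coeff q (n - i))"
      by (simp add: coeff_map_poly D0 coeff_mult)
    also have "\<dots> = (\<Sum>i\<le>n. D (coeff p i) * coeff q (n - i) + coeff p i * D (coeff q (n - i)))"
      by (simp add: sum_comp_morphism[of D, OF D0 add, symmetric] o_def mult)
    also have "\<dots> = coeff (map_poly D p * q + p * map_poly D q) n"
      by (simp add: coeff_mult coeff_map_poly D0 sum.distrib)
    finally show "coeff (map_poly D (p * q)) n = coeff (map_poly D p * q + p * map_poly D q) n" .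
  qed
qed

lemma map_pderiv_add:
    "map_poly pderiv (a + b) = map_poly pderiv a + map_poly pderiv (b :: complex poly poly)"
  and map_pderiv_mult:
    "map_poly pderiv (a * b) = map_poly pderiv a * b + a * map_poly pderiv (b :: complex poly poly)"
  by (rule map_poly_derivation; simp add: pderiv_add pderiv_mult algebra_simps)+

lemma dx_add: "dx (a + b) = dx a + dx b"
  and dx_mult: "dx (a * b) = dx a * b + a * dx b"
  unfolding dx_def by (rule map_poly_derivation; simp add: map_pderiv_add map_pderiv_mult)+

lemma dy_add: "dy (a + b) = dy a + dy b"
  and dy_mult: "dy (a * b) = dy a * b + a * dy b"
  unfolding dy_def by (rule map_poly_derivation; simp add: pderiv_add pderiv_mult algebra_simps)+

lemma dz_add: "dz (a + b) = dz a + dz b"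
  and dz_mult: "dz (a * b) = dz a * b + a * dz b"
  by (simp_all add: dz_def pderiv_add pderiv_mult algebra_simps)

lemma dx_diff: "dx (a - b) = dx a - dx b"
  using dx_add[of "a - b" b] by simp
lemma dy_diff: "dy (a - b) = dy a - dy b"
  using dy_add[of "a - b" b] by simp
lemma dz_diff: "dz (a - b) = dz a - dz b"
  using dz_add[of "a - b" b] by simp

lemma const3_0 [simp]: "const3 0 = 0"
  by (simp add: const3_def)
lemma const3_1: "const3 1 = 1"
  by (simp add: const3_def one_pCons)
lemma const3_mult: "const3 a * const3 b = const3 (a * b)"
  by (simp add: const3_def)

lemma const3_is_unit: "c \<noteq> 0 \<Longrightarrow> is_unit (const3 c)"
  by (metis const3_1 const3_mult dvd_triv_left mult.commute field_class.field_inverse)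

lemma d_const3 [simp]: "dx (const3 c) = 0" "dy (const3 c) = 0" "dz (const3 c) = 0"
  by (simp_all add: dx_def dy_def dz_def const3_def map_poly_pCons)

lemma d_one [simp]: "dx 1 = 0" "dy 1 = 0" "dz 1 = 0"
  using d_const3[of 1] by (simp_all add: const3_1)

lemma d_vars [simp]:
  "dx varx = 1" "dx vary = 0" "dx varz = 0"
  "dy varx = 0" "dy vary = 1" "dy varz = 0"
  "dz varx = 0" "dz vary = 0" "dz varz = 1"
  by (simp_all add: dx_def dy_def dz_def varx_def vary_def varz_def
      map_poly_pCons pderiv_pCons one_pCons)

lemma d_const3_mult:
  "dx (const3 c * a) = const3 c * dx a" "dy (const3 c * a) = const3 c * dy a"
  "dz (const3 c * a) = const3 c * dz a"
  by (simp_all add: dx_mult dy_mult dz_mult)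

lemma d_const_poly:
  "dx [:h:] = [:map_poly pderiv h:]" "dy [:h:] = [:pderiv h:]" "dz [:h:] = 0"
  "dx [:[:k:]:] = [:[:pderiv k:]:]" "dy [:[:k:]:] = 0"
  by (simp_all add: dx_def dy_def dz_def map_poly_pCons)

definition wx :: "cpoly3 \<Rightarrow> cpoly3 \<Rightarrow> cpoly3" where "wx s t = t * dx s - s * dx t"
definition wy :: "cpoly3 \<Rightarrow> cpoly3 \<Rightarrow> cpoly3" where "wy s t = t * dy s - s * dy t"
definition wz :: "cpoly3 \<Rightarrow> cpoly3 \<Rightarrow> cpoly3" where "wz s t = t * dz s - s * dz t"

lemma pbr_cross:
  "pbr s t a b = (dy a * dz b - dz a * dy b) * wx s t + (dz a * dx b - dx a * dz b) * wy s t
     + (dx a * dy b - dy a * dx b) * wz s t"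
  unfolding pbr_def jac_def wx_def wy_def wz_def by (simp add: algebra_simps)

lemma pbr_add: "pbr s t a (b + c) = pbr s t a b + pbr s t a c"
  unfolding pbr_cross by (simp add: dx_add dy_add dz_add algebra_simps)

lemma pbr_mult: "pbr s t a (b * c) = b * pbr s t a c + c * pbr s t a b"
  unfolding pbr_cross by (simp add: dx_mult dy_mult dz_mult algebra_simps)

lemma pbr_power: "b * pbr s t a (b ^ n) = of_nat n * b ^ n * pbr s t a b"
proof (induction n)
  case (Suc n)
  have "b * pbr s t a (b ^ Suc n) = b * (b * pbr s t a (b ^ n)) + b * (b ^ n * pbr s t a b)"
    by (simp add: pbr_mult algebra_simps)
  also have "\<dots> = of_nat (Suc n) * b ^ Suc n * pbr s t a b"
    using Suc by (simp add: algebra_simps)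
  finally show ?case .
qed (simp add: pbr_cross)

lemma pbr_vars:
  "pbr s t varx e = dy e * wz s t - dz e * wy s t"
  "pbr s t vary e = dz e * wx s t - dx e * wz s t"
  "pbr s t varz e = dx e * wy s t - dy e * wx s t"
  by (simp_all add: pbr_cross algebra_simps)

lemma ideal_zero: "is_ideal J \<Longrightarrow> 0 \<in> J"
  and ideal_add: "is_ideal J \<Longrightarrow> a \<in> J \<Longrightarrow> b \<in> J \<Longrightarrow> a + b \<in> J"
  and ideal_mult: "is_ideal J \<Longrightarrow> a \<in> J \<Longrightarrow> r * a \<in> J"
  unfolding is_ideal_def by blast+

lemma ideal_diff: "is_ideal J \<Longrightarrow> a \<in> J \<Longrightarrow> b \<in> J \<Longrightarrow> a - b \<in> J"
  using ideal_add[of J a "(-1) * b"] ideal_mult[of J b "-1"] by simp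

lemma ideal_dvd: "is_ideal J \<Longrightarrow> u \<in> J \<Longrightarrow> u dvd a \<Longrightarrow> a \<in> J"
  by (auto simp: dvd_def mult.commute intro: ideal_mult)

lemma ideal_eq_UNIV_iff: "is_ideal J \<Longrightarrow> J = UNIV \<longleftrightarrow> 1 \<in> J"
  using ideal_dvd[of J 1] by auto

lemma ideal_const3_imp_one: "is_ideal J \<Longrightarrow> const3 k \<in> J \<Longrightarrow> k \<noteq> 0 \<Longrightarrow> 1 \<in> J"
  using ideal_mult[of J "const3 k" "const3 (1/k)"] by (simp add: const3_mult const3_1)

lemma principal_ideal_iff: "a \<in> principal_ideal u \<longleftrightarrow> u dvd a"
  by (auto simp: principal_ideal_def dvd_def mult.commute)

lemma principal_ideal_psubsetD:
  assumes "principal_ideal u \<subset> J" shows "u \<in> J" and "\<exists>e\<in>J. \<not> u dvd e"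
proof -
  have "u \<in> principal_ideal u" by (simp add: principal_ideal_iff)
  thus "u \<in> J" using assms by blast
  show "\<exists>e\<in>J. \<not> u dvd e" using assms by (auto simp: principal_ideal_iff)
qed

lemma is_ideal_principal: "is_ideal (principal_ideal u)"
  unfolding is_ideal_def by (auto simp: principal_ideal_iff)

lemma is_prime_ideal_principal:
  assumes "irreducible u" shows "is_prime_ideal (principal_ideal u)"
proof -
  have "prime_elem u" using assms by (rule irreducible_imp_prime_elem)
  moreover have "principal_ideal u \<noteq> UNIV"
    using assms by (auto simp: ideal_eq_UNIV_iff is_ideal_principal principal_ideal_iff irreducible_def)
  ultimately show ?thesis unfolding is_prime_ideal_def
    using is_ideal_principal by (auto simp: principal_ideal_iff prime_elem_dvd_mult_iff)
qed

lemma is_ideal_sum: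
  assumes "is_ideal I" "is_ideal J" shows "is_ideal {i + j |i j. i \<in> I \<and> j \<in> J}"
  unfolding is_ideal_def
proof (intro conjI ballI allI)
  show "0 \<in> {i + j |i j. i \<in> I \<and> j \<in> J}" using assms by (force intro: ideal_zero)
next
  fix a b assume "a \<in> {i + j |i j. i \<in> I \<and> j \<in> J}" "b \<in> {i + j |i j. i \<in> I \<and> j \<in> J}"
  then obtain i j i' j' where "a = i + j" "b = i' + j'" "i \<in> I" "j \<in> J" "i' \<in> I" "j' \<in> J"
    by blast
  moreover have "a + b = (i + i') + (j + j')" using calculation by (simp add: algebra_simps)
  ultimately show "a + b \<in> {i + j |i j. i \<in> I \<and> j \<in> J}" using assms by (blast intro: ideal_add)
next
  fix r a assume "a \<in> {i + j |i j. i \<in> I \<and> j \<in> J}"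
  then obtain i j where "a = i + j" "i \<in> I" "j \<in> J" by blast
  moreover have "r * a = r * i + r * j" using calculation by (simp add: algebra_simps)
  ultimately show "r * a \<in> {i + j |i j. i \<in> I \<and> j \<in> J}" using assms by (blast intro: ideal_mult)
qed

lemma poisson_ideal_sum:
  assumes "poisson_ideal s t I" "poisson_ideal s t J"
  shows "poisson_ideal s t {i + j |i j. i \<in> I \<and> j \<in> J}"
  unfolding poisson_ideal_def
proof (intro conjI allI ballI)
  show "is_ideal {i + j |i j. i \<in> I \<and> j \<in> J}"
    using assms is_ideal_sum unfolding poisson_ideal_def by blast
  fix a b assume "b \<in> {i + j |i j. i \<in> I \<and> j \<in> J}"
  then obtain i j where "b = i + j" "i \<in> I" "j \<in> J" by blast
  moreover have "pbr s t a i \<in> I" "pbr s t a j \<in> J"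
    using assms calculation unfolding poisson_ideal_def by blast+
  ultimately show "pbr s t a b \<in> {i + j |i j. i \<in> I \<and> j \<in> J}" by (auto simp: pbr_add)
qed

definition saturation :: "cpoly3 \<Rightarrow> cpoly3 set \<Rightarrow> cpoly3 set" where
  "saturation g I = {a. \<exists>n. g ^ n * a \<in> I}"

lemma subset_saturation: "I \<subseteq> saturation g I"
  unfolding saturation_def by (auto intro!: exI[of _ 0])

lemma saturation_cancel:
  assumes "g * a \<in> saturation g I" shows "a \<in> saturation g I"
proof -
  obtain n where "g ^ n * (g * a) \<in> I" using assms unfolding saturation_def by blast
  hence "g ^ Suc n * a \<in> I" by (simp add: mult.assoc mult.left_commute)
  thus ?thesis unfolding saturation_def by blast
qed

lemma is_ideal_saturation:
  assumes I: "is_ideal I" shows "is_ideal (saturation g I)"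
  unfolding is_ideal_def
proof (intro conjI ballI allI)
  show "0 \<in> saturation g I" using subset_saturation ideal_zero[OF I] by blast
next
  fix a b assume "a \<in> saturation g I" "b \<in> saturation g I"
  then obtain n m where "g ^ n * a \<in> I" "g ^ m * b \<in> I" unfolding saturation_def by blast
  hence "g ^ m * (g ^ n * a) + g ^ n * (g ^ m * b) \<in> I" by (blast intro: ideal_add[OF I] ideal_mult[OF I])
  hence "g ^ (n + m) * (a + b) \<in> I" by (simp add: power_add algebra_simps)
  thus "a + b \<in> saturation g I" unfolding saturation_def by blast
next
  fix r a assume "a \<in> saturation g I"
  then obtain n where "g ^ n * a \<in> I" unfolding saturation_def by blast
  hence "r * (g ^ n * a) \<in> I" by (rule ideal_mult[OF I])
  hence "g ^ n * (r * a) \<in> I" by (simp add: mult.left_commute)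
  thus "r * a \<in> saturation g I" unfolding saturation_def by blast
qed

text \<open>Multiplying by \<open>g\<close> once more absorbs the error term of the Leibniz rule:
  \<open>g\<^sup>n\<^sup>+\<^sup>1 {a,x} = g {a, g\<^sup>n x} - n {a,g} g\<^sup>n x\<close>.\<close>

lemma poisson_ideal_saturation:
  assumes P: "poisson_ideal s t I" shows "poisson_ideal s t (saturation g I)"
  unfolding poisson_ideal_def
proof (intro conjI allI ballI)
  have I: "is_ideal I" using P unfolding poisson_ideal_def by blast
  show "is_ideal (saturation g I)" using is_ideal_saturation[OF I] .
  fix a x assume "x \<in> saturation g I"
  then obtain n where n: "g ^ n * x \<in> I" unfolding saturation_def by blast
  have "g * pbr s t a (g ^ n * x) = g * (g ^ n * pbr s t a x) + x * (g * pbr s t a (g ^ n))"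
    by (simp add: pbr_mult algebra_simps)
  also have "\<dots> = g ^ Suc n * pbr s t a x + of_nat n * pbr s t a g * (g ^ n * x)"
    by (simp add: pbr_power algebra_simps)
  finally have "g ^ Suc n * pbr s t a x
      = g * pbr s t a (g ^ n * x) - of_nat n * pbr s t a g * (g ^ n * x)" by simp
  moreover have "pbr s t a (g ^ n * x) \<in> I" using P n unfolding poisson_ideal_def by blast
  ultimately have "g ^ Suc n * pbr s t a x \<in> I" using n by (simp add: ideal_diff ideal_mult I)
  thus "pbr s t a x \<in> saturation g I" unfolding saturation_def by blast
qed

section \<open>The vector \<open>w\<close> modulo an irreducible factor\<close>

lemma dvd_const3_mult_iff: "c \<noteq> 0 \<Longrightarrow> u dvd const3 c * a \<longleftrightarrow> u dvd a"
  by (simp add: const3_is_unit dvd_mult_unit_iff')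

lemma w_pencil:
  fixes lam mu :: complex and s t :: cpoly3
  defines "f \<equiv> const3 lam * s - const3 mu * t"
  shows "const3 lam * wx s t = t * dx f - f * dx t"
    "const3 lam * wy s t = t * dy f - f * dy t"
    "const3 lam * wz s t = t * dz f - f * dz t"
    "const3 mu * wx s t = s * dx f - f * dx s"
    "const3 mu * wy s t = s * dy f - f * dy s"
    "const3 mu * wz s t = s * dz f - f * dz s"
  unfolding f_def wx_def wy_def wz_def
  by (simp_all only: dx_diff dy_diff dz_diff d_const3_mult) (simp_all add: algebra_simps)

lemma dvd_w_if_multiplicity_ne_1:
  assumes "(lam, mu) \<noteq> (0, 0)" and "irreducible u"
    and "u dvd const3 lam * s - const3 mu * t"
    and "multiplicity u (const3 lam * s - const3 mu * t) \<noteq> 1"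
  shows "u dvd wx s t" "u dvd wy s t" "u dvd wz s t"
proof -
  define f where "f = const3 lam * s - const3 mu * t"
  have "u ^ 2 dvd f"
  proof (cases "f = 0")
    case False
    have "\<not> is_unit u" using assms(2) by (simp add: irreducible_def)
    hence "1 \<le> multiplicity u f" using False assms(3) by (simp add: f_def multiplicity_geI)
    hence "2 \<le> multiplicity u f" using assms(4) f_def by simp
    thus ?thesis by (rule multiplicity_dvd')
  qed simp
  then obtain v where v: "f = u ^ 2 * v" by (auto simp: dvd_def)
  have "u dvd f" "u dvd dx f" "u dvd dy f" "u dvd dz f"
    unfolding v by (simp_all add: dx_mult dy_mult dz_mult power2_eq_square)
  hence "u dvd h * dx f - f * dx h \<and> u dvd h * dy f - f * dy h \<and> u dvd h * dz f - f * dz h" for h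
    by simp
  hence "u dvd const3 c * wx s t \<and> u dvd const3 c * wy s t \<and> u dvd const3 c * wz s t"
    if "c = lam \<or> c = mu" for c
    using that w_pencil[where lam=lam and mu=mu and s=s and t=t, folded f_def] by auto
  moreover obtain c where "c = lam \<or> c = mu" "c \<noteq> 0" using assms(1) by auto
  ultimately show "u dvd wx s t" "u dvd wy s t" "u dvd wz s t"
    using dvd_const3_mult_iff by blast+
qed

definition w_cong_grad :: "cpoly3 \<Rightarrow> cpoly3 \<Rightarrow> cpoly3 \<Rightarrow> cpoly3 \<Rightarrow> bool" where
  "w_cong_grad s t u c \<longleftrightarrow> (\<exists>mx my mz.
     wx s t = c * dx u + u * mx \<and> wy s t = c * dy u + u * my \<and> wz s t = c * dz u + u * mz)"

lemma w_cong_grad_if_simple_factor: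
  assumes "prime_elem u" and "c0 \<noteq> 0" and f: "f = u * v" and "\<not> u dvd v" and "\<not> u dvd h"
    and w: "const3 c0 * wx s t = h * dx f - f * dx h" "const3 c0 * wy s t = h * dy f - f * dy h"
      "const3 c0 * wz s t = h * dz f - f * dz h"
  shows "\<exists>c. \<not> u dvd c \<and> w_cong_grad s t u c"
proof -
  define k where "k = const3 (1 / c0)"
  have k: "k * const3 c0 = 1" using assms(2) by (simp add: k_def const3_mult const3_1)
  have "\<not> u dvd k"
  proof
    assume "u dvd k"
    hence "u dvd 1" using k by (metis dvd_mult2)
    thus False using assms(1) prime_elem_not_unit by blast
  qed
  hence nd: "\<not> u dvd k * h * v" using assms(1,4,5) by (simp add: prime_elem_dvd_mult_iff)
  have scale: "W = (k * h * v) * D + u * (k * M)" if "const3 c0 * W = (h * v) * D + u * M"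
    for W D M
  proof -
    have "W = k * (const3 c0 * W)" using k by (simp add: mult.assoc[symmetric])
    also have "\<dots> = k * ((h * v) * D + u * M)" using that by simp
    finally show ?thesis by (simp add: algebra_simps)
  qed
  have leibniz: "h * D f - f * D h = (h * v) * D u + u * (h * D v - v * D h)"
    if "D (u * v) = D u * v + u * D v" for D :: "cpoly3 \<Rightarrow> cpoly3"
    using that by (simp add: f algebra_simps)
  have "w_cong_grad s t u (k * h * v)" unfolding w_cong_grad_def
    using scale[OF w(1)[unfolded leibniz[OF dx_mult]]] scale[OF w(2)[unfolded leibniz[OF dy_mult]]]
      scale[OF w(3)[unfolded leibniz[OF dz_mult]]] by blast
  with nd show ?thesis by blast
qed

lemma w_cong_grad_if_multiplicity_1:
  assumes "coprime s t" and "(lam, mu) \<noteq> (0, 0)" and "irreducible u"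
    and "multiplicity u (const3 lam * s - const3 mu * t) = 1"
  shows "\<exists>c. \<not> u dvd c \<and> w_cong_grad s t u c"
proof -
  define f where "f = const3 lam * s - const3 mu * t"
  note w = w_pencil[where lam=lam and mu=mu and s=s and t=t, folded f_def]
  have pu: "prime_elem u" using assms(3) by (rule irreducible_imp_prime_elem)
  have f0: "f \<noteq> 0" using assms(4) by (auto simp: f_def)
  have "u ^ 1 dvd f" using assms(4) by (intro multiplicity_dvd') (simp add: f_def)
  then obtain v where v: "f = u * v" by (auto simp: dvd_def)
  have nv: "\<not> u dvd v"
  proof
    assume "u dvd v"
    hence "u ^ 2 dvd f" by (auto simp: v power2_eq_square)
    hence "2 \<le> multiplicity u f" using f0 pu by (auto intro: multiplicity_geI simp: prime_elem_def)
    thus False using assms(4) by (simp add: f_def)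
  qed
  have uf: "u dvd f" using v by simp
  have not_both: "\<not> (u dvd s \<and> u dvd t)"
    using assms(1) pu by (meson coprime_common_divisor prime_elem_not_unit)
  show ?thesis
  proof (cases "lam = 0")
    case True
    hence mu: "mu \<noteq> 0" using assms(2) by simp
    have "\<not> u dvd s"
    proof
      assume "u dvd s"
      moreover have "u dvd const3 mu * t" using uf True by (simp add: f_def)
      ultimately show False using not_both dvd_const3_mult_iff[OF mu] by blast
    qed
    thus ?thesis using w_cong_grad_if_simple_factor[OF pu mu v nv _ w(4-6)] by blast
  next
    case False
    have "\<not> u dvd t"
    proof
      assume "u dvd t"
      moreover have "const3 lam * s = f + const3 mu * t" by (simp add: f_def)
      ultimately have "u dvd const3 lam * s" using uf by simp
      thus False using not_both dvd_const3_mult_iff[OF False] \<open>u dvd t\<close> by blast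
    qed
    thus ?thesis using w_cong_grad_if_simple_factor[OF pu False v nv _ w(1-3)] by blast
  qed
qed

section \<open>Elimination\<close>

lemma field_poly_bezout:
  fixes p q :: "'k::field poly"
  assumes irr: "irreducible p" and nd: "\<not> p dvd q"
  shows "\<exists>a b. a * p + b * q = 1"
proof -
  define I where "I = {a * p + b * q |a b. True}"
  have "p = 1 * p + 0 * q" "q = 0 * p + 1 * q" by simp_all
  hence pI: "p \<in> I" and qI: "q \<in> I" unfolding I_def by blast+
  have closed: "x - k * y \<in> I" if "x \<in> I" "y \<in> I" for x y k
  proof -
    from that obtain a b a' b' where "x = a * p + b * q" "y = a' * p + b' * q"
      unfolding I_def by blast
    hence "x - k * y = (a - k * a') * p + (b - k * b') * q" by (simp add: algebra_simps)
    thus ?thesis unfolding I_def by blast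
  qed
  have "p \<noteq> 0" using irr by auto
  then obtain d where d: "d \<in> I" "d \<noteq> 0"
    and least: "\<And>e. e \<in> I \<and> e \<noteq> 0 \<Longrightarrow> degree d \<le> degree e"
    using ex_has_least_nat[of "\<lambda>e. e \<in> I \<and> e \<noteq> 0" p degree] pI by blast
  have d_dvd: "d dvd e" if "e \<in> I" for e
  proof (rule ccontr)
    assume "\<not> d dvd e"
    hence "e mod d \<noteq> 0" by (simp add: mod_eq_0_iff_dvd)
    moreover have "e mod d \<in> I"
      using closed[OF that d(1), of "e div d"] by (simp add: minus_div_mult_eq_mod)
    ultimately have "degree d \<le> degree (e mod d)" using least by blast
    thus False using degree_mod_less'[OF d(2) \<open>e mod d \<noteq> 0\<close>] by simp
  qed
  obtain e where "p = d * e" using d_dvd[OF pI] by (auto simp: dvd_def)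
  moreover have "\<not> is_unit e"
    using \<open>p = d * e\<close> d_dvd[OF qI] nd by (metis dvd_mult_unit_iff dvd_refl dvd_trans mult.commute)
  ultimately have "is_unit d" using irreducibleD[OF irr] by blast
  then obtain k where "1 = d * k" by (auto simp: dvd_def)
  moreover obtain a b where "d = a * p + b * q" using d(1) unfolding I_def by blast
  ultimately have "(k * a) * p + (k * b) * q = 1" by (simp add: algebra_simps)
  thus ?thesis by blast
qed

lemma fract_poly_clear_denominator:
  fixes X :: "'a :: {factorial_semiring,semiring_Gcd,ring_gcd,idom_divide,
                     semiring_gcd_mult_normalize} fract poly"
  obtains d X' where "d \<noteq> 0" "smult (to_fract d) X = fract_poly X'"
proof -
  obtain c p' where cp: "X = smult c (fract_poly p')" by (rule content_decompose_fract)
  obtain a b where ab: "c = Fract a b" "b \<noteq> 0" by (cases c)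
  have "smult (to_fract b) X = fract_poly (smult a p')"
    using ab by (simp add: cp Fract_conv_to_fract)
  thus ?thesis using that ab(2) by blast
qed

text \<open>Solve the Bezout identity over the fraction field and clear denominators.\<close>

lemma irreducible_poly_elimination:
  fixes p q :: "'a :: {factorial_semiring,semiring_Gcd,ring_gcd,idom_divide,
                     semiring_gcd_mult_normalize} poly"
  assumes irr: "irreducible p" and deg: "degree p \<noteq> 0" and nd: "\<not> p dvd q"
  shows "\<exists>a b r. r \<noteq> 0 \<and> a * p + b * q = [:r:]"
proof -
  have i: "irreducible (fract_poly p)" and c: "content p = 1"
    using nonconst_poly_irreducible_iff[OF deg] irr by auto
  have "\<not> fract_poly p dvd fract_poly q" using fract_poly_dvdD[OF _ c] nd by blast
  then obtain A B where AB: "A * fract_poly p + B * fract_poly q = 1"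
    using field_poly_bezout[OF i] by blast
  obtain dA A' where A: "dA \<noteq> 0" "smult (to_fract dA) A = fract_poly A'"
    by (rule fract_poly_clear_denominator)
  obtain dB B' where B: "dB \<noteq> 0" "smult (to_fract dB) B = fract_poly B'"
    by (rule fract_poly_clear_denominator)
  have "fract_poly (smult dB A' * p + smult dA B' * q)
      = smult (to_fract (dA * dB)) (A * fract_poly p + B * fract_poly q)"
    by (simp add: A(2)[symmetric] B(2)[symmetric] smult_add_right mult.commute mult.left_commute)
  also have "\<dots> = fract_poly [:dA * dB:]" by (simp add: AB map_poly_pCons)
  finally have "smult dB A' * p + smult dA B' * q = [:dA * dB:]" by (simp only: fract_poly_eq_iff)
  moreover have "dA * dB \<noteq> 0" using A(1) B(1) by simp
  ultimately show ?thesis by blast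
qed

section \<open>Zeros of irreducible polynomials\<close>

definition eval2 :: "complex \<Rightarrow> complex \<Rightarrow> complex poly poly \<Rightarrow> complex" where
  "eval2 a b q = poly (poly q [:b:]) a"

definition eval3 :: "complex \<Rightarrow> complex \<Rightarrow> complex \<Rightarrow> cpoly3 \<Rightarrow> complex" where
  "eval3 a b c q = eval2 a b (poly q [:[:c:]:])"

lemma eval2_simps [simp]:
  "eval2 a b (p + q) = eval2 a b p + eval2 a b q" "eval2 a b (p - q) = eval2 a b p - eval2 a b q"
  "eval2 a b (p * q) = eval2 a b p * eval2 a b q" "eval2 a b 0 = 0" "eval2 a b 1 = 1"
  "eval2 a b [:h:] = poly h a"
  by (simp_all add: eval2_def)

lemma eval3_simps [simp]:
  "eval3 a b c (p + q) = eval3 a b c p + eval3 a b c q"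
  "eval3 a b c (p - q) = eval3 a b c p - eval3 a b c q"
  "eval3 a b c (p * q) = eval3 a b c p * eval3 a b c q" "eval3 a b c 0 = 0" "eval3 a b c 1 = 1"
  "eval3 a b c [:h:] = eval2 a b h"
  "eval3 a b c (const3 k) = k" "eval3 a b c varx = a" "eval3 a b c vary = b" "eval3 a b c varz = c"
  by (simp_all add: eval3_def eval2_def const3_def varx_def vary_def varz_def)

lemma eval3_power [simp]: "eval3 a b c (p ^ n) = eval3 a b c p ^ n"
  by (induction n) simp_all

lemma poly_hom_commute:
  assumes "\<And>x y. \<phi> (x + y) = \<phi> x + \<phi> y" "\<And>x y. \<phi> (x * y) = \<phi> x * \<phi> y" "\<phi> 0 = 0"
  shows "\<phi> (poly q X) = poly (map_poly \<phi> q) (\<phi> X)"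
  by (induction q) (simp_all add: map_poly_pCons assms)

lemma eval2_as_poly: "eval2 a b q = poly (map_poly (\<lambda>h. poly h a) q) b"
  using poly_hom_commute[of "\<lambda>h. poly h a" q "[:b:]"] by (simp add: eval2_def)

lemma eval3_as_poly: "eval3 a b c q = poly (map_poly (eval2 a b) q) c"
  using poly_hom_commute[of "eval2 a b" q "[:[:c:]:]"] by (simp add: eval3_def)

lemma complex_poly_root: "degree (q :: complex poly) > 0 \<Longrightarrow> \<exists>z. poly q z = 0"
  using fundamental_theorem_of_algebra constant_degree by (metis neq0_conv)

lemma eval2_nonzero_if_coeff:
  assumes "poly (coeff q j) a \<noteq> 0" shows "\<exists>b. eval2 a b q \<noteq> 0"
proof -
  have "coeff (map_poly (\<lambda>h. poly h a) q) j \<noteq> 0" using assms by (simp add: coeff_map_poly)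
  hence "map_poly (\<lambda>h. poly h a) q \<noteq> 0" by auto
  then obtain b where "poly (map_poly (\<lambda>h. poly h a) q) b \<noteq> 0" using poly_all_0_iff_0 by blast
  thus ?thesis by (auto simp: eval2_as_poly)
qed

lemma eval2_nonzero:
  assumes "q \<noteq> 0" shows "\<exists>a b. eval2 a b q \<noteq> 0"
proof -
  have "lead_coeff q \<noteq> 0" using assms by simp
  then obtain a where "poly (lead_coeff q) a \<noteq> 0" using poly_all_0_iff_0 by blast
  thus ?thesis using eval2_nonzero_if_coeff by blast
qed

lemma eval3_nonzero_if_coeff:
  assumes "eval2 a b (coeff g k) \<noteq> 0" shows "\<exists>c. eval3 a b c g \<noteq> 0"
proof -
  have "coeff (map_poly (eval2 a b) g) k \<noteq> 0" using assms by (simp add: coeff_map_poly)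
  hence "map_poly (eval2 a b) g \<noteq> 0" by auto
  then obtain c where "poly (map_poly (eval2 a b) g) c \<noteq> 0" using poly_all_0_iff_0 by blast
  thus ?thesis by (auto simp: eval3_as_poly)
qed

lemma complex_poly_zero_avoiding:
  fixes u g :: "complex poly"
  assumes irr: "irreducible u" and nd: "\<not> u dvd g"
  shows "\<exists>a. poly u a = 0 \<and> poly g a \<noteq> 0"
proof -
  obtain A B where AB: "A * u + B * g = 1" using field_poly_bezout[OF irr nd] by blast
  have "degree u > 0" using irr is_unit_iff_degree[of u] by (auto simp: irreducible_def)
  then obtain a where a: "poly u a = 0" using complex_poly_root by blast
  have "poly (A * u + B * g) a = 1" using AB by simp
  thus ?thesis using a by auto
qed

text \<open>For \<open>u\<close> of positive degree in the outer variable, eliminating that variable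
  leaves a nonzero \<open>r\<close>; over a point where \<open>r\<close> and the leading coefficient of \<open>u\<close>
  do not vanish, any root of \<open>u\<close> avoids \<open>g\<close>.\<close>

lemma eval2_zero_avoiding:
  fixes u g :: "complex poly poly"
  assumes irr: "irreducible u" and nd: "\<not> u dvd g"
  shows "\<exists>a b. eval2 a b u = 0 \<and> eval2 a b g \<noteq> 0"
proof (cases "degree u = 0")
  case True
  then obtain u0 where u0: "u = [:u0:]" by (rule degree_eq_zeroE)
  have "irreducible u0" using irr by (simp add: u0 irreducible_const_poly_iff)
  moreover obtain k where "\<not> u0 dvd coeff g k" using nd by (auto simp: u0 const_poly_dvd_iff)
  ultimately obtain a where "poly u0 a = 0" "poly (coeff g k) a \<noteq> 0"
    using complex_poly_zero_avoiding by blast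
  thus ?thesis using eval2_nonzero_if_coeff by (auto simp: u0)
next
  case False
  obtain A B r where r: "r \<noteq> 0" "A * u + B * g = [:r:]"
    using irreducible_poly_elimination[OF irr False nd] by blast
  have "r * lead_coeff u \<noteq> 0" using r(1) irr by auto
  then obtain a where "poly (r * lead_coeff u) a \<noteq> 0" using poly_all_0_iff_0 by blast
  hence ar: "poly r a \<noteq> 0" and al: "poly (lead_coeff u) a \<noteq> 0" by auto
  have "degree (map_poly (\<lambda>h. poly h a) u) = degree u" by (rule map_poly_degree_eq) (rule al)
  then obtain b where b: "eval2 a b u = 0"
    using complex_poly_root[of "map_poly (\<lambda>h. poly h a) u"] False by (auto simp: eval2_as_poly)
  have "eval2 a b (A * u + B * g) = poly r a" using r by simp
  hence "eval2 a b g \<noteq> 0" using b ar by auto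
  thus ?thesis using b by blast
qed

lemma eval3_zero_avoiding:
  fixes u g :: cpoly3
  assumes irr: "irreducible u" and nd: "\<not> u dvd g"
  shows "\<exists>a b c. eval3 a b c u = 0 \<and> eval3 a b c g \<noteq> 0"
proof (cases "degree u = 0")
  case True
  then obtain u0 where u0: "u = [:u0:]" by (rule degree_eq_zeroE)
  have "irreducible u0" using irr by (simp add: u0 irreducible_const_poly_iff)
  moreover obtain k where "\<not> u0 dvd coeff g k" using nd by (auto simp: u0 const_poly_dvd_iff)
  ultimately obtain a b where "eval2 a b u0 = 0" "eval2 a b (coeff g k) \<noteq> 0"
    using eval2_zero_avoiding by blast
  moreover obtain c where "eval3 a b c g \<noteq> 0" using eval3_nonzero_if_coeff calculation(2) by blast
  ultimately show ?thesis by (auto simp: u0)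
next
  case False
  obtain A B r where r: "r \<noteq> 0" "A * u + B * g = [:r:]"
    using irreducible_poly_elimination[OF irr False nd] by blast
  have "r * lead_coeff u \<noteq> 0" using r(1) irr by auto
  then obtain a b where "eval2 a b (r * lead_coeff u) \<noteq> 0" using eval2_nonzero by blast
  hence ar: "eval2 a b r \<noteq> 0" and al: "eval2 a b (lead_coeff u) \<noteq> 0" by auto
  have "degree (map_poly (eval2 a b) u) = degree u" by (rule map_poly_degree_eq) (rule al)
  then obtain c where c: "eval3 a b c u = 0"
    using complex_poly_root[of "map_poly (eval2 a b) u"] False by (auto simp: eval3_as_poly)
  have "eval3 a b c (A * u + B * g) = eval2 a b r" using r by simp
  hence "eval3 a b c g \<noteq> 0" using c ar by auto
  thus ?thesis using c by blast
qed

definition point_ideal :: "complex \<Rightarrow> complex \<Rightarrow> complex \<Rightarrow> cpoly3 set" where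
  "point_ideal a b c = {q. eval3 a b c q = 0}"

lemma is_ideal_point_ideal: "is_ideal (point_ideal a b c)"
  by (simp add: is_ideal_def point_ideal_def)

lemma point_ideal_ne_UNIV: "point_ideal a b c \<noteq> UNIV"
proof -
  have "1 \<notin> point_ideal a b c" by (simp add: point_ideal_def)
  thus ?thesis by blast
qed

lemma is_prime_point_ideal: "is_prime_ideal (point_ideal a b c)"
  using is_ideal_point_ideal point_ideal_ne_UNIV
  by (auto simp: is_prime_ideal_def point_ideal_def)

lemma is_maximal_point_ideal: "is_maximal_ideal (point_ideal a b c)"
  unfolding is_maximal_ideal_def
proof (intro conjI allI impI is_ideal_point_ideal point_ideal_ne_UNIV)
  fix J assume J: "is_ideal J \<and> point_ideal a b c \<subseteq> J"
  show "J = point_ideal a b c \<or> J = UNIV"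
  proof (cases "J \<subseteq> point_ideal a b c")
    case False
    then obtain e where e: "e \<in> J" "eval3 a b c e \<noteq> 0" by (auto simp: point_ideal_def)
    have "e - const3 (eval3 a b c e) \<in> J" using J by (auto simp: point_ideal_def)
    hence "const3 (eval3 a b c e) \<in> J" using ideal_diff[OF _ e(1)] J by fastforce
    hence "1 \<in> J" using J e(2) ideal_const3_imp_one by blast
    thus ?thesis using J ideal_eq_UNIV_iff by blast
  qed (use J in blast)
qed

lemma principal_ideal_subset_point_ideal:
  "eval3 a b c u = 0 \<Longrightarrow> principal_ideal u \<subseteq> point_ideal a b c"
  by (auto simp: principal_ideal_def point_ideal_def)

lemma irreducible_not_dvd_both_lines:
  assumes irr: "irreducible u"
  shows "\<not> (u dvd varx - const3 a \<and> u dvd vary - const3 b)"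
proof
  have lines: "varx - const3 a = [:[:[:-a, 1:]:]:]" "vary - const3 b = [:[:[:-b:], 1:]:]"
    by (simp_all add: varx_def vary_def const3_def one_pCons)
  assume "u dvd varx - const3 a \<and> u dvd vary - const3 b"
  hence d1: "u dvd [:[:[:-a, 1:]:]:]" and d2: "u dvd [:[:[:-b:], 1:]:]" by (simp_all add: lines)
  have "degree u = 0" using dvd_imp_degree_le[OF d1] by simp
  then obtain u0 where u0: "u = [:u0:]" by (rule degree_eq_zeroE)
  have "degree u0 = 0"
    using d1 dvd_imp_degree_le[of u0 "[:[:-a, 1:]:]"] by (simp add: u0 const_poly_dvd_const_poly_iff)
  then obtain u00 where u00: "u0 = [:u00:]" by (rule degree_eq_zeroE)
  have "[:u00:] dvd [:[:-b:], 1:]" using d2 by (simp add: u0 u00 const_poly_dvd_const_poly_iff)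
  hence "u00 dvd coeff [:[:-b:], 1:] 1" using const_poly_dvd_iff by blast
  hence "is_unit u" by (simp add: u0 u00 is_unit_const_poly_iff)
  thus False using irr by (simp add: irreducible_def)
qed

lemma principal_ideal_not_maximal:
  assumes irr: "irreducible u" shows "\<not> is_maximal_ideal (principal_ideal u)"
proof
  assume max: "is_maximal_ideal (principal_ideal u)"
  have "\<not> u dvd 1" using irr by (simp add: irreducible_def)
  then obtain a b c where "eval3 a b c u = 0" using eval3_zero_avoiding[OF irr] by blast
  hence "point_ideal a b c = principal_ideal u \<or> point_ideal a b c = UNIV"
    using max principal_ideal_subset_point_ideal is_ideal_point_ideal
    unfolding is_maximal_ideal_def by blast
  hence eq: "point_ideal a b c = principal_ideal u" using point_ideal_ne_UNIV by blast
  have "varx - const3 a \<in> point_ideal a b c" "vary - const3 b \<in> point_ideal a b c"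
    by (simp_all add: point_ideal_def)
  thus False using irreducible_not_dvd_both_lines[OF irr] by (simp add: eq principal_ideal_iff)
qed

section \<open>The residually null case\<close>

lemma residually_null_if_dvd_w:
  assumes "u dvd wx s t" "u dvd wy s t" "u dvd wz s t"
  shows "residually_null s t (principal_ideal u)"
proof -
  have "pbr s t a b \<in> principal_ideal u" for a b
    unfolding pbr_cross principal_ideal_iff using assms by (intro dvd_add dvd_diff dvd_mult) auto
  thus ?thesis unfolding residually_null_def poisson_ideal_def using is_ideal_principal by blast
qed

lemma poisson_ideal_if_contains_residually_null:
  "residually_null s t P \<Longrightarrow> P \<subseteq> Q \<Longrightarrow> is_ideal Q \<Longrightarrow> poisson_ideal s t Q"
  unfolding residually_null_def poisson_ideal_def by blast

lemma not_poisson_primitive_if_residually_null: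
  assumes "residually_null s t P" and "\<not> is_maximal_ideal P"
  shows "\<not> poisson_primitive s t P"
proof
  assume "poisson_primitive s t P"
  then obtain M where M: "is_maximal_ideal M" "is_poisson_core s t P M"
    unfolding poisson_primitive_def by blast
  hence "P \<subseteq> M" unfolding is_poisson_core_def by blast
  moreover have "is_ideal M" using M(1) unfolding is_maximal_ideal_def by blast
  ultimately have "poisson_ideal s t M"
    using poisson_ideal_if_contains_residually_null[OF assms(1)] by blast
  hence "M = P" using M(2) \<open>P \<subseteq> M\<close> unfolding is_poisson_core_def by blast
  thus False using M(1) assms(2) by simp
qed

lemma not_locally_closed_if_residually_null:
  assumes irr: "irreducible u" and rn: "residually_null s t (principal_ideal u)"
  shows "\<not> locally_closed s t (principal_ideal u)"
proof -
  let ?P = "principal_ideal u"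
  have "x \<in> ?P" if x: "x \<in> \<Inter>{Q. poisson_prime s t Q \<and> ?P \<subset> Q}" for x
  proof (rule ccontr)
    assume "x \<notin> ?P"
    then obtain a b c where abc: "eval3 a b c u = 0" "eval3 a b c x \<noteq> 0"
      using eval3_zero_avoiding[OF irr] unfolding principal_ideal_iff by blast
    have "?P \<subseteq> point_ideal a b c" by (rule principal_ideal_subset_point_ideal[OF abc(1)])
    moreover have "?P \<noteq> point_ideal a b c"
      using is_maximal_point_ideal[of a b c] principal_ideal_not_maximal[OF irr] by auto
    moreover have "poisson_prime s t (point_ideal a b c)"
      unfolding poisson_prime_def using calculation(1) rn is_ideal_point_ideal is_prime_point_ideal
      by (blast intro: poisson_ideal_if_contains_residually_null)
    ultimately have "x \<in> point_ideal a b c" using x by blast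
    thus False using abc(2) by (simp add: point_ideal_def)
  qed
  hence "\<Inter>{Q. poisson_prime s t Q \<and> ?P \<subset> Q} \<subseteq> ?P" by blast
  moreover have "?P \<subseteq> \<Inter>{Q. poisson_prime s t Q \<and> ?P \<subset> Q}" by blast
  ultimately show ?thesis unfolding locally_closed_def by blast
qed

section \<open>The case of a simple factor\<close>

lemma irreducible_cpoly3_cases:
  fixes u :: cpoly3
  assumes "irreducible u"
  obtains (z) "degree u > 0"
    | (y) u0 where "u = [:u0:]" "degree u0 > 0" "irreducible u0"
    | (x) u00 where "u = [:[:u00:]:]" "degree u00 > 0" "irreducible u00"
proof (cases "degree u > 0")
  case False
  then obtain u0 where u0: "u = [:u0:]" by (metis degree_0_id neq0_conv)
  have i0: "irreducible u0" using assms by (simp add: u0 irreducible_const_poly_iff)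
  show ?thesis
  proof (cases "degree u0 > 0")
    case False
    then obtain u00 where u00: "u0 = [:u00:]" by (metis degree_0_id neq0_conv)
    have i00: "irreducible u00" using i0 by (simp add: u00 irreducible_const_poly_iff)
    show ?thesis
    proof (cases "degree u00 > 0")
      case False
      then obtain k where "u = const3 k" by (metis degree_0_id neq0_conv u0 u00 const3_def)
      moreover have "k \<noteq> 0" using assms calculation by auto
      ultimately show ?thesis using assms const3_is_unit by (auto simp: irreducible_def)
    qed (use u0 u00 i00 x in blast)
  qed (use u0 i0 y in blast)
qed (rule z)

lemma not_dvd_pderiv:
  fixes u :: "'a::{idom,ring_char_0} poly"
  assumes "degree u > 0" shows "\<not> u dvd pderiv u"
proof
  assume "u dvd pderiv u"
  moreover have "pderiv u \<noteq> 0" using assms by (simp add: pderiv_eq_0_iff)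
  ultimately have "degree u \<le> degree (pderiv u)" by (rule dvd_imp_degree_le)
  thus False using assms by (simp add: degree_pderiv)
qed

lemma irreducible_not_dvd_all_derivs:
  assumes "irreducible u" shows "\<not> (u dvd dx u \<and> u dvd dy u \<and> u dvd dz u)"
  using assms
proof (cases rule: irreducible_cpoly3_cases)
  case z thus ?thesis using not_dvd_pderiv by (simp add: dz_def)
next
  case (y u0) thus ?thesis using not_dvd_pderiv by (simp add: d_const_poly const_poly_dvd_const_poly_iff)
next
  case (x u00)
  thus ?thesis using not_dvd_pderiv by (simp add: d_const_poly map_poly_pCons const_poly_dvd_const_poly_iff)
qed

lemma poisson_ideal_principal_if_w_cong_grad:
  assumes "w_cong_grad s t u c" shows "poisson_ideal s t (principal_ideal u)"
  unfolding poisson_ideal_def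
proof (intro conjI allI ballI is_ideal_principal)
  fix a b assume "b \<in> principal_ideal u"
  then obtain k where k: "b = u * k" by (auto simp: principal_ideal_iff dvd_def)
  obtain mx my mz where w: "wx s t = c * dx u + u * mx" "wy s t = c * dy u + u * my"
    "wz s t = c * dz u + u * mz" using assms unfolding w_cong_grad_def by blast
  have "pbr s t a u = u * ((dy a * dz u - dz a * dy u) * mx + (dz a * dx u - dx a * dz u) * my
     + (dx a * dy u - dy a * dx u) * mz)"
    unfolding pbr_cross w by (simp add: algebra_simps)
  hence "u dvd pbr s t a u" by simp
  thus "pbr s t a b \<in> principal_ideal u" by (simp add: k pbr_mult principal_ideal_iff)
qed

lemma not_residually_null_if_w_cong_grad:
  assumes irr: "irreducible u" and "\<not> u dvd c" and "w_cong_grad s t u c"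
  shows "\<not> residually_null s t (principal_ideal u)"
proof
  assume "residually_null s t (principal_ideal u)"
  hence rn: "u dvd pbr s t a b" for a b unfolding residually_null_def principal_ideal_iff by blast
  obtain mx my mz where w: "wx s t = c * dx u + u * mx" "wy s t = c * dy u + u * my"
    "wz s t = c * dz u + u * mz" using assms(3) unfolding w_cong_grad_def by blast
  have "u dvd wx s t" "u dvd wy s t" "u dvd wz s t"
    using rn[of vary varz] rn[of varz varx] rn[of varx vary] by (simp_all add: pbr_vars)
  hence "u dvd c * dx u" "u dvd c * dy u" "u dvd c * dz u"
    unfolding w by (simp_all add: dvd_add_left_iff)
  hence "u dvd dx u \<and> u dvd dy u \<and> u dvd dz u"
    using assms(2) irreducible_imp_prime_elem[OF irr] by (simp add: prime_elem_dvd_mult_iff)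
  thus False using irreducible_not_dvd_all_derivs[OF irr] by blast
qed

lemma w_cong_grad_cross_in_ideal:
  assumes wc: "w_cong_grad s t u c" and P: "poisson_ideal s t J" and "u \<in> J" "e \<in> J"
  shows "c * (dy e * dz u - dz e * dy u) \<in> J" "c * (dz e * dx u - dx e * dz u) \<in> J"
    "c * (dx e * dy u - dy e * dx u) \<in> J"
proof -
  obtain mx my mz where w: "wx s t = c * dx u + u * mx" "wy s t = c * dy u + u * my"
    "wz s t = c * dz u + u * mz" using wc unfolding w_cong_grad_def by blast
  have J: "is_ideal J" and br: "\<And>a. pbr s t a e \<in> J"
    using P \<open>e \<in> J\<close> unfolding poisson_ideal_def by blast+
  have "u * m \<in> J" for m using ideal_mult[OF J \<open>u \<in> J\<close>] by (simp add: mult.commute)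
  hence "pbr s t a e - u * m \<in> J" for a m using ideal_diff[OF J br] by blast
  moreover have "c * (dy e * dz u - dz e * dy u) = pbr s t varx e - u * (dy e * mz - dz e * my)"
    "c * (dz e * dx u - dx e * dz u) = pbr s t vary e - u * (dz e * mx - dx e * mz)"
    "c * (dx e * dy u - dy e * dx u) = pbr s t varz e - u * (dx e * my - dy e * mx)"
    by (simp_all add: pbr_vars w algebra_simps)
  ultimately show "c * (dy e * dz u - dz e * dy u) \<in> J" "c * (dz e * dx u - dx e * dz u) \<in> J"
    "c * (dx e * dy u - dy e * dx u) \<in> J" by simp_all
qed

lemma pderiv_closed_has_nonzero_const:
  fixes H :: "'a::{idom,ring_char_0} poly set"
  assumes "\<And>h. h \<in> H \<Longrightarrow> pderiv h \<in> H"
  shows "h \<in> H \<Longrightarrow> h \<noteq> 0 \<Longrightarrow> \<exists>k. k \<noteq> 0 \<and> [:k:] \<in> H"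
proof (induction "degree h" arbitrary: h rule: less_induct)
  case less
  show ?case
  proof (cases "degree h = 0")
    case True
    then obtain k where "h = [:k:]" by (rule degree_eq_zeroE)
    thus ?thesis using less.prems by auto
  next
    case False
    hence "pderiv h \<noteq> 0" "degree (pderiv h) < degree h"
      by (simp_all add: pderiv_eq_0_iff degree_pderiv)
    thus ?thesis using less assms by blast
  qed
qed

text \<open>An element \<open>e\<close> whose derivative is divisible by \<open>p\<close> is congruent modulo \<open>p\<close> to its
  constant coefficient; this needs the integers \<open>n + 1\<close> to be invertible.\<close>

lemma pderiv_closed_has_const_not_dvd:
  fixes H :: "'a::{idom,ring_char_0} poly set"
  assumes pd: "\<And>h. h \<in> H \<Longrightarrow> pderiv h \<in> H"
    and diff: "\<And>a b. a \<in> H \<Longrightarrow> b \<in> H \<Longrightarrow> a - b \<in> H"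
    and mult: "\<And>q. [:p:] dvd q \<Longrightarrow> q \<in> H"
    and unit: "\<And>n. of_nat (Suc n) dvd (1 :: 'a)"
  shows "e \<in> H \<Longrightarrow> \<not> [:p:] dvd e \<Longrightarrow> \<exists>e0. [:e0:] \<in> H \<and> \<not> p dvd e0"
proof (induction "degree e" arbitrary: e rule: less_induct)
  case less
  show ?case
  proof (cases "[:p:] dvd pderiv e")
    case False
    hence "degree e \<noteq> 0" by (auto simp: pderiv_eq_0_iff[symmetric])
    hence "degree (pderiv e) < degree e" by (simp add: degree_pderiv)
    thus ?thesis using False less pd by blast
  next
    case True
    have dvd_coeff: "p dvd coeff e (Suc n)" for n
    proof -
      obtain k :: 'a where k: "1 = of_nat (Suc n) * k" using unit[of n] by (rule dvdE)
      have "coeff e (Suc n) = (of_nat (Suc n) * k) * coeff e (Suc n)" using k[symmetric] by simp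
      also have "\<dots> = k * coeff (pderiv e) n" by (simp add: coeff_pderiv algebra_simps)
      finally show ?thesis using True const_poly_dvd_iff by (metis dvd_mult)
    qed
    hence "[:p:] dvd e - [:coeff e 0:]"
      by (auto simp: const_poly_dvd_iff coeff_pCons split: nat.split)
    hence "[:coeff e 0:] \<in> H" using diff[OF less.prems(1) mult] by fastforce
    moreover have "\<not> p dvd coeff e 0"
    proof
      assume "p dvd coeff e 0"
      hence "p dvd coeff e n" for n using dvd_coeff by (cases n) auto
      thus False using less.prems(2) by (simp add: const_poly_dvd_iff)
    qed
    ultimately show ?thesis by blast
  qed
qed

lemma of_nat_Suc_is_unit_poly: "of_nat (Suc n) dvd (1 :: 'a::field_char_0 poly)"
proof -
  have "(of_nat (Suc n) :: 'a) \<noteq> 0" by (rule of_nat_neq_0)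
  hence "of_nat (Suc n) dvd (1 :: 'a)" by (simp add: dvd_field_iff)
  thus ?thesis by (simp add: of_nat_poly is_unit_const_poly_iff del: of_nat_Suc)
qed

lemma of_nat_Suc_is_unit_poly_poly: "of_nat (Suc n) dvd (1 :: 'a::field_char_0 poly poly)"
  using of_nat_Suc_is_unit_poly[of n, where 'a='a]
  by (simp add: of_nat_poly[of "Suc n"] is_unit_const_poly_iff del: of_nat_Suc)

lemma one_in_ideal_if_pderiv_x_closed:
  assumes J: "is_ideal J" and closed: "\<And>h. [:[:h:]:] \<in> J \<Longrightarrow> [:[:pderiv h:]:] \<in> J"
    and "[:[:h:]:] \<in> J" "h \<noteq> 0"
  shows "1 \<in> J"
proof -
  obtain k where "k \<noteq> 0" "[:k:] \<in> {h. [:[:h:]:] \<in> J}"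
    using pderiv_closed_has_nonzero_const[of "{h. [:[:h:]:] \<in> J}" h] closed assms(3,4) by auto
  thus ?thesis using ideal_const3_imp_one[OF J, of k] by (simp add: const3_def)
qed

definition poisson_separator :: "cpoly3 \<Rightarrow> cpoly3 \<Rightarrow> cpoly3 \<Rightarrow> cpoly3 \<Rightarrow> bool" where
  "poisson_separator s t u g \<longleftrightarrow> \<not> u dvd g \<and>
     (\<forall>J. poisson_ideal s t J \<longrightarrow> principal_ideal u \<subset> J \<longrightarrow>
       (\<forall>e. g * e \<in> J \<longrightarrow> e \<in> J) \<longrightarrow> 1 \<in> J)"

text \<open>One lemma per shape of \<open>u\<close>, with \<open>g = c \<partial>u\<close> for the outermost variable of \<open>u\<close>.
  For suitable \<open>e \<in> J\<close> the cross product \<open>c (grad e \<times> grad u) \<in> J\<close> is \<open>\<plusminus>g\<close> times a partial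
  derivative of \<open>e\<close>, so the \<open>g\<close>-saturated \<open>J\<close> is closed under these derivatives.
  Eliminating variables from a witness \<open>e \<in> J - (u)\<close> and differentiating down then
  produces a nonzero constant.\<close>

lemma poisson_separator_z:
  assumes irr: "irreducible u" and deg: "degree u > 0" and "\<not> u dvd c" and wc: "w_cong_grad s t u c"
  shows "poisson_separator s t u (c * dz u)"
  unfolding poisson_separator_def
proof (intro conjI allI impI)
  show "\<not> u dvd c * dz u"
    using assms(3) not_dvd_pderiv[OF deg] irreducible_imp_prime_elem[OF irr]
    by (simp add: dz_def prime_elem_dvd_mult_iff)
  fix J assume P: "poisson_ideal s t J" and PJ: "principal_ideal u \<subset> J"
    and sat: "\<forall>e. c * dz u * e \<in> J \<longrightarrow> e \<in> J"
  have J: "is_ideal J" using P unfolding poisson_ideal_def by blast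
  have uJ: "u \<in> J" using principal_ideal_psubsetD(1)[OF PJ] .
  note cross = w_cong_grad_cross_in_ideal[OF wc P uJ]
  have dy_closed: "[:pderiv h:] \<in> J" if "[:h:] \<in> J" for h
  proof -
    have "c * dz u * [:pderiv h:] \<in> J" using cross(1)[OF that] by (simp add: d_const_poly algebra_simps)
    thus ?thesis using sat by blast
  qed
  have dx_closed: "[:[:pderiv h:]:] \<in> J" if "[:[:h:]:] \<in> J" for h
  proof -
    have "c * dz u * [:[:pderiv h:]:] \<in> J"
      using ideal_mult[OF J cross(2)[OF that], of "-1"]
      by (simp add: d_const_poly map_poly_pCons algebra_simps)
    thus ?thesis using sat by blast
  qed
  obtain e where e: "e \<in> J" "\<not> u dvd e" using principal_ideal_psubsetD(2)[OF PJ] by blast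
  obtain A B r where r: "r \<noteq> 0" "A * u + B * e = [:r:]"
    using irreducible_poly_elimination[OF irr _ e(2)] deg by auto
  have "[:r:] \<in> J" using ideal_add[OF J ideal_mult[OF J uJ] ideal_mult[OF J e(1)]] r(2) by metis
  then obtain k where "k \<noteq> 0" "[:[:k:]:] \<in> J"
    using pderiv_closed_has_nonzero_const[of "{h. [:h:] \<in> J}" r] dy_closed r(1) by auto
  thus "1 \<in> J" using one_in_ideal_if_pderiv_x_closed[OF J dx_closed] by blast
qed

lemma poisson_separator_y:
  assumes u: "u = [:u0:]" and irr: "irreducible u0" and deg: "degree u0 > 0"
    and "\<not> u dvd c" and wc: "w_cong_grad s t u c"
  shows "poisson_separator s t u (c * dy u)"
  unfolding poisson_separator_def
proof (intro conjI allI impI)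
  have du: "dy u = [:pderiv u0:]" "dz u = 0" by (simp_all add: u d_const_poly)
  have "prime_elem u" using irr by (simp add: u irreducible_imp_prime_elem irreducible_const_poly_iff)
  moreover have "\<not> u dvd dy u" using not_dvd_pderiv[OF deg]
    by (simp add: u d_const_poly map_poly_pCons const_poly_dvd_const_poly_iff)
  ultimately show "\<not> u dvd c * dy u" using assms(4) by (simp add: prime_elem_dvd_mult_iff)
  fix J assume P: "poisson_ideal s t J" and PJ: "principal_ideal u \<subset> J"
    and sat: "\<forall>e. c * dy u * e \<in> J \<longrightarrow> e \<in> J"
  have J: "is_ideal J" using P unfolding poisson_ideal_def by blast
  have uJ: "u \<in> J" using principal_ideal_psubsetD(1)[OF PJ] .
  note cross = w_cong_grad_cross_in_ideal[OF wc P uJ]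
  have dz_closed: "pderiv e \<in> J" if "e \<in> J" for e
  proof -
    have "c * dy u * dz e \<in> J" using ideal_mult[OF J cross(1)[OF that], of "-1"]
      by (simp add: du algebra_simps)
    thus ?thesis using sat by (simp add: dz_def)
  qed
  have dx_closed: "[:[:pderiv h:]:] \<in> J" if "[:[:h:]:] \<in> J" for h
  proof -
    have "c * dy u * [:[:pderiv h:]:] \<in> J" using cross(3)[OF that]
      by (simp add: d_const_poly map_poly_pCons algebra_simps)
    thus ?thesis using sat by blast
  qed
  obtain e where "e \<in> J" "\<not> [:u0:] dvd e" using principal_ideal_psubsetD(2)[OF PJ] u by blast
  then obtain e0 where e0: "[:e0:] \<in> J" "\<not> u0 dvd e0"
    using pderiv_closed_has_const_not_dvd[OF dz_closed ideal_diff[OF J]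
        ideal_dvd[OF J uJ, unfolded u] of_nat_Suc_is_unit_poly_poly] by blast
  obtain A B r where r: "r \<noteq> 0" "A * u0 + B * e0 = [:r:]"
    using irreducible_poly_elimination[OF irr _ e0(2)] deg by auto
  have "[:A:] * u + [:B:] * [:e0:] \<in> J" using ideal_add[OF J ideal_mult[OF J uJ] ideal_mult[OF J e0(1)]] .
  hence "[:[:r:]:] \<in> J" using r(2) by (simp add: u mult.commute)
  thus "1 \<in> J" using one_in_ideal_if_pderiv_x_closed[OF J dx_closed] r(1) by blast
qed

lemma poisson_separator_x:
  assumes u: "u = [:[:u00:]:]" and irr: "irreducible u00" and deg: "degree u00 > 0"
    and "\<not> u dvd c" and wc: "w_cong_grad s t u c"
  shows "poisson_separator s t u (c * dx u)"
  unfolding poisson_separator_def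
proof (intro conjI allI impI)
  have du: "dx u = [:[:pderiv u00:]:]" "dy u = 0" "dz u = 0"
    by (simp_all add: u d_const_poly map_poly_pCons)
  have "prime_elem u" using irr by (simp add: u irreducible_imp_prime_elem irreducible_const_poly_iff)
  moreover have "\<not> u dvd dx u" using not_dvd_pderiv[OF deg]
    by (simp add: u d_const_poly map_poly_pCons const_poly_dvd_const_poly_iff)
  ultimately show "\<not> u dvd c * dx u" using assms(4) by (simp add: prime_elem_dvd_mult_iff)
  fix J assume P: "poisson_ideal s t J" and PJ: "principal_ideal u \<subset> J"
    and sat: "\<forall>e. c * dx u * e \<in> J \<longrightarrow> e \<in> J"
  have J: "is_ideal J" using P unfolding poisson_ideal_def by blast
  have uJ: "u \<in> J" using principal_ideal_psubsetD(1)[OF PJ] .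
  note cross = w_cong_grad_cross_in_ideal[OF wc P uJ]
  have dz_closed: "pderiv e \<in> J" if "e \<in> J" for e
  proof -
    have "c * dx u * dz e \<in> J" using cross(2)[OF that] by (simp add: du algebra_simps)
    thus ?thesis using sat by (simp add: dz_def)
  qed
  have dy_closed: "[:pderiv q:] \<in> J" if "[:q:] \<in> J" for q
  proof -
    have "c * dx u * [:pderiv q:] \<in> J" using ideal_mult[OF J cross(3)[OF that], of "-1"]
      by (simp add: du d_const_poly algebra_simps)
    thus ?thesis using sat by blast
  qed
  obtain e where "e \<in> J" "\<not> [:[:u00:]:] dvd e" using principal_ideal_psubsetD(2)[OF PJ] u by blast
  then obtain e0 where "[:e0:] \<in> J" "\<not> [:u00:] dvd e0"
    using pderiv_closed_has_const_not_dvd[OF dz_closed ideal_diff[OF J]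
        ideal_dvd[OF J uJ, unfolded u] of_nat_Suc_is_unit_poly_poly] by blast
  moreover have "[:a - b:] \<in> J" if "[:a:] \<in> J" "[:b:] \<in> J" for a b
    using ideal_diff[OF J that] by simp
  moreover have "[:q:] \<in> J" if "[:u00:] dvd q" for q
    using ideal_dvd[OF J uJ] that by (simp add: u const_poly_dvd_const_poly_iff)
  ultimately obtain e00 where e00: "[:[:e00:]:] \<in> J" "\<not> u00 dvd e00"
    using pderiv_closed_has_const_not_dvd[of "{q. [:q:] \<in> J}" u00 e0] dy_closed
      of_nat_Suc_is_unit_poly by blast
  obtain A B where AB: "A * u00 + B * e00 = 1" using field_poly_bezout[OF irr e00(2)] by blast
  have "[:[:A:]:] * u + [:[:B:]:] * [:[:e00:]:] \<in> J"
    using ideal_add[OF J ideal_mult[OF J uJ] ideal_mult[OF J e00(1)]] .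
  thus "1 \<in> J" using AB by (simp add: u one_pCons mult.commute)
qed

lemma exists_poisson_separator:
  assumes "irreducible u" and "\<not> u dvd c" and "w_cong_grad s t u c"
  shows "\<exists>g. poisson_separator s t u g"
  using assms(1)
proof (cases rule: irreducible_cpoly3_cases)
  case z thus ?thesis using poisson_separator_z assms by blast
next
  case (y u0) thus ?thesis using poisson_separator_y assms(2,3) by blast
next
  case (x u00) thus ?thesis using poisson_separator_x assms(2,3) by blast
qed

lemma locally_closed_if_poisson_separator:
  assumes "is_prime_ideal (principal_ideal u)" and P: "poisson_ideal s t (principal_ideal u)"
    and sep: "poisson_separator s t u g"
  shows "locally_closed s t (principal_ideal u)"
  unfolding locally_closed_def
proof
  show "poisson_prime s t (principal_ideal u)" using assms(1) P by (simp add: poisson_prime_def)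
  have "g \<in> Q" if Q: "poisson_prime s t Q" "principal_ideal u \<subset> Q" for Q
  proof (rule ccontr)
    assume "g \<notin> Q"
    hence "\<forall>e. g * e \<in> Q \<longrightarrow> e \<in> Q" using Q(1) by (auto simp: poisson_prime_def is_prime_ideal_def)
    hence "1 \<in> Q" using sep Q by (auto simp: poisson_separator_def poisson_prime_def)
    thus False using Q(1) ideal_eq_UNIV_iff
      by (auto simp: poisson_prime_def is_prime_ideal_def)
  qed
  moreover have "g \<notin> principal_ideal u" using sep by (simp add: poisson_separator_def principal_ideal_iff)
  ultimately show "principal_ideal u \<noteq> \<Inter>{Q. poisson_prime s t Q \<and> principal_ideal u \<subset> Q}"
    by blast
qed

text \<open>Take a point of the zero set of \<open>u\<close> where \<open>g\<close> does not vanish. If a Poisson ideal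
  \<open>J\<close> inside its point ideal were not contained in \<open>(u)\<close>, the saturation of \<open>J + (u)\<close> with
  respect to \<open>g\<close> would contain \<open>1\<close>, i.e. \<open>g\<^sup>n \<in> J + (u)\<close>, which fails at the point.\<close>

lemma poisson_primitive_if_poisson_separator:
  assumes irr: "irreducible u" and P: "poisson_ideal s t (principal_ideal u)"
    and sep: "poisson_separator s t u g"
  shows "poisson_primitive s t (principal_ideal u)"
proof -
  let ?P = "principal_ideal u"
  have "\<not> u dvd g" using sep by (simp add: poisson_separator_def)
  then obtain a b c where abc: "eval3 a b c u = 0" "eval3 a b c g \<noteq> 0"
    using eval3_zero_avoiding[OF irr] by blast
  let ?M = "point_ideal a b c"
  have core: "J \<subseteq> ?P" if J: "poisson_ideal s t J" "J \<subseteq> ?M" for J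
  proof (rule ccontr)
    assume "\<not> J \<subseteq> ?P"
    define K where "K = saturation g {j + p |j p. j \<in> J \<and> p \<in> ?P}"
    have sum: "J \<subseteq> {j + p |j p. j \<in> J \<and> p \<in> ?P}" "?P \<subseteq> {j + p |j p. j \<in> J \<and> p \<in> ?P}"
      using ideal_zero is_ideal_principal J(1) unfolding poisson_ideal_def by force+
    have "poisson_ideal s t K"
      unfolding K_def by (intro poisson_ideal_saturation poisson_ideal_sum J(1) P)
    moreover have "?P \<subset> K"
      using sum subset_saturation[of _ g] \<open>\<not> J \<subseteq> ?P\<close> unfolding K_def by blast
    moreover have "\<forall>e. g * e \<in> K \<longrightarrow> e \<in> K" unfolding K_def using saturation_cancel by blast
    ultimately have "1 \<in> K" using sep unfolding poisson_separator_def by blast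
    then obtain n j p where "g ^ n = j + p" "j \<in> J" "p \<in> ?P"
      unfolding K_def saturation_def by auto
    moreover have "eval3 a b c j = 0" using \<open>j \<in> J\<close> J(2) by (auto simp: point_ideal_def)
    moreover have "eval3 a b c p = 0"
      using \<open>p \<in> ?P\<close> principal_ideal_subset_point_ideal[OF abc(1)] by (auto simp: point_ideal_def)
    ultimately have "eval3 a b c g ^ n = 0" by (metis eval3_power eval3_simps(1) add_0)
    thus False using abc(2) by simp
  qed
  show ?thesis
    unfolding poisson_primitive_def is_poisson_core_def poisson_prime_def
    using P is_prime_ideal_principal[OF irr] is_maximal_point_ideal core
      principal_ideal_subset_point_ideal[OF abc(1)] by blast
qed

theorem lemma3p6:
  fixes s t u :: cpoly3 and lam mu :: complex
  assumes "s \<noteq> 0" and "t \<noteq> 0" and "coprime s t"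
    and "(lam, mu) \<noteq> (0, 0)"
    and "irreducible u" and "u dvd (const3 lam * s - const3 mu * t)"
  shows "(poisson_primitive s t (principal_ideal u)
            \<longleftrightarrow> \<not> residually_null s t (principal_ideal u))
       \<and> (\<not> residually_null s t (principal_ideal u)
            \<longleftrightarrow> multiplicity u (const3 lam * s - const3 mu * t) = 1)
       \<and> (multiplicity u (const3 lam * s - const3 mu * t) = 1
            \<longleftrightarrow> locally_closed s t (principal_ideal u))"
proof (cases "multiplicity u (const3 lam * s - const3 mu * t) = 1")
  case True
  then obtain c where c: "\<not> u dvd c" "w_cong_grad s t u c"
    using w_cong_grad_if_multiplicity_1[OF assms(3-5)] by blast
  then obtain g where "poisson_separator s t u g" using exists_poisson_separator[OF assms(5)] by blast
  moreover have "poisson_ideal s t (principal_ideal u)"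
    using poisson_ideal_principal_if_w_cong_grad[OF c(2)] .
  ultimately show ?thesis
    using True not_residually_null_if_w_cong_grad[OF assms(5) c]
      poisson_primitive_if_poisson_separator[OF assms(5)]
      locally_closed_if_poisson_separator[OF is_prime_ideal_principal[OF assms(5)]] by blast
next
  case False
  hence "residually_null s t (principal_ideal u)"
    using residually_null_if_dvd_w dvd_w_if_multiplicity_ne_1[OF assms(4-6)] by blast
  thus ?thesis
    using False not_poisson_primitive_if_residually_null principal_ideal_not_maximal[OF assms(5)]
      not_locally_closed_if_residually_null[OF assms(5)] by blast
qed

end
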